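(* Let $f\colon2^{\mathcal N}\to\mathbb R_{\ge0}$ be a non-negative submodular function, $\mathbf p$ a positive price vector over $\mathcal N$, $s\in\mathcal N$ and $\gamma\in(0,1)$. Let $\mathcal N^*=(\mathcal N\setminus\{s\})\cup\{\sigma_1,\sigma_2\}$ with new elements $\sigma_1,\sigma_2$, and define $f^*\colon2^{\mathcal N^*}\to\mathbb R_{\ge0}$ by $$f^*(S)=f(\widehat S)+\gamma\,\big(f(\widehat S\cup\{s\})-f(\widehat S)\big)\,\mathbb I[\sigma_1\in S]+(1-\gamma)\,\big(f(\widehat S\cup\{s\})-f(\widehat S)\big)\,\mathbb I[\sigma_2\in S],$$ where $\widehat S=S\setminus\{\sigma_1,\sigma_2\}$ and $\mathbb I[\cdot]$ is the indicator. Then $f^*$ is submodular.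
   Context: $f$ is submodular if $f(S\cup\{u\})-f(S)\ge f(T\cup\{u\})-f(T)$ for all $S\subseteq T$ and $u\notin T$. (The construction of $f^*$, together with prices $p^*_{\sigma_1}=\gamma p_s$, $p^*_{\sigma_2}=(1-\gamma)p_s$ and $p^*_x=p_x$ otherwise, is called a $\gamma$-split of $s$.) *)

theory Defs
  imports Complex_Main
begin

definition submodular_on :: "'a set \<Rightarrow> ('a set \<Rightarrow> real) \<Rightarrow> bool" where
  "submodular_on N f \<longleftrightarrow>
     (\<forall>S T u. S \<subseteq> T \<longrightarrow> T \<subseteq> N \<longrightarrow> u \<in> N \<longrightarrow> u \<notin> T \<longrightarrow>
        f (S \<union> {u}) - f S \<ge> f (T \<union> {u}) - f T)"

definition split_fun :: "('a set \<Rightarrow> real) \<Rightarrow> 'a \<Rightarrow> real \<Rightarrow> 'a \<Rightarrow> 'a \<Rightarrow> 'a set \<Rightarrow> real" where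
  "split_fun f s \<gamma> \<sigma>1 \<sigma>2 S =
     (let Sh = S - {\<sigma>1, \<sigma>2}; m = f (Sh \<union> {s}) - f Sh in
      f Sh + \<gamma> * m * (if \<sigma>1 \<in> S then 1 else 0)
           + (1 - \<gamma>) * m * (if \<sigma>2 \<in> S then 1 else 0))"

end

theory Submission
  imports Defs
begin

text \<open>
  Write \<open>\<hat>X = X - {\<sigma>1, \<sigma>2}\<close>. The split function is
  \<open>f(\<hat>X) + w(X) \<cdot> (f(\<hat>X \<union> {s}) - f(\<hat>X))\<close>, where the weight \<open>w(X) \<in> [0,1]\<close> is monotone
  in \<open>X\<close>. Adding a copy \<open>\<sigma>\<^sub>i\<close> of \<open>s\<close> raises the weight by a constant, so its marginal
  gain is a fixed multiple of the marginal gain of \<open>s\<close> in \<open>f\<close>, which decreases by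
  submodularity of \<open>f\<close>. Adding an original element \<open>u\<close> keeps the weight, and its
  marginal gain is the \<open>w(X)\<close>-interpolation between the marginal gains of \<open>u\<close> at \<open>\<hat>X\<close>
  and at \<open>\<hat>X \<union> {s}\<close>. When \<open>X\<close> grows, both endpoints decrease, the first endpoint
  dominates the second, and the interpolation parameter moves towards the smaller one.
\<close>

lemma submodular_onD:
  assumes "submodular_on N f" "S \<subseteq> T" "T \<subseteq> N" "u \<in> N" "u \<notin> T"
  shows "f (S \<union> {u}) - f S \<ge> f (T \<union> {u}) - f T"
  using assms unfolding submodular_on_def by blast

lemma convex_combination_antimono:
  fixes a a' b b' c c' :: real
  assumes "a' \<le> a" "b' \<le> b" "b' \<le> a'" "0 \<le> c" "c \<le> c'" "c' \<le> 1"
  shows "(1 - c') * a' + c' * b' \<le> (1 - c) * a + c * b"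
proof -
  have "0 \<le> (1 - c) * (a - a')" "0 \<le> c * (b - b')" "0 \<le> (c' - c) * (a' - b')"
    using assms by simp_all
  then show ?thesis by (simp add: algebra_simps)
qed

definition split_weight :: "real \<Rightarrow> 'a \<Rightarrow> 'a \<Rightarrow> 'a set \<Rightarrow> real" where
  "split_weight \<gamma> \<sigma>1 \<sigma>2 X = \<gamma> * of_bool (\<sigma>1 \<in> X) + (1 - \<gamma>) * of_bool (\<sigma>2 \<in> X)"

lemma split_weight_nonneg: "0 \<le> \<gamma> \<Longrightarrow> \<gamma> \<le> 1 \<Longrightarrow> 0 \<le> split_weight \<gamma> \<sigma>1 \<sigma>2 X"
  unfolding split_weight_def by simp

lemma split_weight_le_one: "0 \<le> \<gamma> \<Longrightarrow> \<gamma> \<le> 1 \<Longrightarrow> split_weight \<gamma> \<sigma>1 \<sigma>2 X \<le> 1"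
  unfolding split_weight_def by (cases "\<sigma>1 \<in> X"; cases "\<sigma>2 \<in> X") simp_all

lemma split_weight_mono:
  "0 \<le> \<gamma> \<Longrightarrow> \<gamma> \<le> 1 \<Longrightarrow> S \<subseteq> T \<Longrightarrow> split_weight \<gamma> \<sigma>1 \<sigma>2 S \<le> split_weight \<gamma> \<sigma>1 \<sigma>2 T"
  unfolding split_weight_def by (auto intro!: add_mono)

lemma split_weight_insert_copy:
  assumes "\<sigma>1 \<noteq> \<sigma>2" "u \<in> {\<sigma>1, \<sigma>2}" "u \<notin> X"
  shows "split_weight \<gamma> \<sigma>1 \<sigma>2 (X \<union> {u})
           = split_weight \<gamma> \<sigma>1 \<sigma>2 X + (if u = \<sigma>1 then \<gamma> else 1 - \<gamma>)"
  using assms unfolding split_weight_def by auto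

lemma split_weight_insert_other:
  "u \<notin> {\<sigma>1, \<sigma>2} \<Longrightarrow> split_weight \<gamma> \<sigma>1 \<sigma>2 (X \<union> {u}) = split_weight \<gamma> \<sigma>1 \<sigma>2 X"
  unfolding split_weight_def by auto

lemma split_fun_eq:
  "split_fun f s \<gamma> \<sigma>1 \<sigma>2 X =
     f (X - {\<sigma>1, \<sigma>2}) + split_weight \<gamma> \<sigma>1 \<sigma>2 X *
       (f (X - {\<sigma>1, \<sigma>2} \<union> {s}) - f (X - {\<sigma>1, \<sigma>2}))"
  unfolding split_fun_def split_weight_def Let_def by (simp add: algebra_simps)

lemma split_fun_marginal_copy:
  assumes "\<sigma>1 \<noteq> \<sigma>2" "u \<in> {\<sigma>1, \<sigma>2}" "u \<notin> X"
  shows "split_fun f s \<gamma> \<sigma>1 \<sigma>2 (X \<union> {u}) - split_fun f s \<gamma> \<sigma>1 \<sigma>2 X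
           = (if u = \<sigma>1 then \<gamma> else 1 - \<gamma>) *
               (f (X - {\<sigma>1, \<sigma>2} \<union> {s}) - f (X - {\<sigma>1, \<sigma>2}))"
proof -
  have "X \<union> {u} - {\<sigma>1, \<sigma>2} = X - {\<sigma>1, \<sigma>2}"
    using assms(2) by auto
  then show ?thesis
    unfolding split_fun_eq split_weight_insert_copy[OF assms] by (simp add: algebra_simps)
qed

lemma split_fun_marginal_other:
  fixes X :: "'a set" and \<gamma> :: real
  assumes "u \<notin> {\<sigma>1, \<sigma>2}"
  defines "Xh \<equiv> X - {\<sigma>1, \<sigma>2}" and "w \<equiv> split_weight \<gamma> \<sigma>1 \<sigma>2 X"
  shows "split_fun f s \<gamma> \<sigma>1 \<sigma>2 (X \<union> {u}) - split_fun f s \<gamma> \<sigma>1 \<sigma>2 X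
           = (1 - w) * (f (Xh \<union> {u}) - f Xh) + w * (f (Xh \<union> {s} \<union> {u}) - f (Xh \<union> {s}))"
proof -
  have "X \<union> {u} - {\<sigma>1, \<sigma>2} = Xh \<union> {u}" "Xh \<union> {u} \<union> {s} = Xh \<union> {s} \<union> {u}"
    using assms(1) unfolding Xh_def by auto
  then show ?thesis
    unfolding split_fun_eq split_weight_insert_other[OF assms(1)] Xh_def[symmetric] w_def[symmetric]
    by (simp add: algebra_simps)
qed

lemma split_fun_marginal_copy_antimono:
  assumes "submodular_on N f" "s \<in> N" "0 \<le> \<gamma>" "\<gamma> \<le> 1" "\<sigma>1 \<noteq> \<sigma>2"
    and "S \<subseteq> T" "T - {\<sigma>1, \<sigma>2} \<subseteq> N - {s}" "u \<in> {\<sigma>1, \<sigma>2}" "u \<notin> T"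
  shows "split_fun f s \<gamma> \<sigma>1 \<sigma>2 (T \<union> {u}) - split_fun f s \<gamma> \<sigma>1 \<sigma>2 T
           \<le> split_fun f s \<gamma> \<sigma>1 \<sigma>2 (S \<union> {u}) - split_fun f s \<gamma> \<sigma>1 \<sigma>2 S"
proof -
  have "f (T - {\<sigma>1, \<sigma>2} \<union> {s}) - f (T - {\<sigma>1, \<sigma>2}) \<le> f (S - {\<sigma>1, \<sigma>2} \<union> {s}) - f (S - {\<sigma>1, \<sigma>2})"
    using assms by (intro submodular_onD[where N = N]) auto
  moreover have "0 \<le> (if u = \<sigma>1 then \<gamma> else 1 - \<gamma>)"
    using assms(3,4) by simp
  moreover have "u \<notin> S"
    using assms(6,9) by blast
  ultimately show ?thesis
    unfolding split_fun_marginal_copy[OF assms(5,8,9)] split_fun_marginal_copy[OF assms(5,8) \<open>u \<notin> S\<close>]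
    by (simp add: mult_left_mono)
qed

lemma split_fun_marginal_other_antimono:
  assumes "submodular_on N f" "s \<in> N" "0 \<le> \<gamma>" "\<gamma> \<le> 1"
    and "S \<subseteq> T" "T - {\<sigma>1, \<sigma>2} \<subseteq> N - {s}" "u \<in> N - {s}" "u \<notin> {\<sigma>1, \<sigma>2}" "u \<notin> T"
  shows "split_fun f s \<gamma> \<sigma>1 \<sigma>2 (T \<union> {u}) - split_fun f s \<gamma> \<sigma>1 \<sigma>2 T
           \<le> split_fun f s \<gamma> \<sigma>1 \<sigma>2 (S \<union> {u}) - split_fun f s \<gamma> \<sigma>1 \<sigma>2 S"
proof -
  define Sh Th where "Sh = S - {\<sigma>1, \<sigma>2}" and "Th = T - {\<sigma>1, \<sigma>2}"
  have Th: "Sh \<subseteq> Th" "Th \<union> {s} \<subseteq> N" "u \<notin> Th \<union> {s}"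
    using assms unfolding Sh_def Th_def by auto
  have "f (Th \<union> {u}) - f Th \<le> f (Sh \<union> {u}) - f Sh"
    using Th assms(1,7) by (intro submodular_onD[where N = N]) auto
  moreover have "f (Th \<union> {s} \<union> {u}) - f (Th \<union> {s}) \<le> f (Sh \<union> {s} \<union> {u}) - f (Sh \<union> {s})"
    using Th assms(1,7) by (intro submodular_onD[where N = N]) auto
  moreover have "f (Th \<union> {s} \<union> {u}) - f (Th \<union> {s}) \<le> f (Th \<union> {u}) - f Th"
    using Th assms(1,7) by (intro submodular_onD[where N = N]) auto
  ultimately show ?thesis
    unfolding split_fun_marginal_other[OF assms(8)] Sh_def[symmetric] Th_def[symmetric]
    using assms(3-5)
    by (intro convex_combination_antimono split_weight_nonneg split_weight_mono split_weight_le_one)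
qed

theorem lemma5p20:
  fixes N :: "'a set" and f :: "'a set \<Rightarrow> real" and p :: "'a \<Rightarrow> real"
    and s \<sigma>1 \<sigma>2 :: 'a and \<gamma> :: real
  assumes "finite N"
    and "\<And>S. S \<subseteq> N \<Longrightarrow> f S \<ge> 0"
    and "submodular_on N f"
    and "\<And>x. x \<in> N \<Longrightarrow> p x > 0"
    and "s \<in> N"
    and "0 < \<gamma>" and "\<gamma> < 1"
    and "\<sigma>1 \<notin> N" and "\<sigma>2 \<notin> N" and "\<sigma>1 \<noteq> \<sigma>2"
  shows "submodular_on ((N - {s}) \<union> {\<sigma>1, \<sigma>2}) (split_fun f s \<gamma> \<sigma>1 \<sigma>2)"
  unfolding submodular_on_def
proof (intro allI impI)
  fix S T u
  assume ST: "S \<subseteq> T" and T: "T \<subseteq> (N - {s}) \<union> {\<sigma>1, \<sigma>2}"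
    and u: "u \<in> (N - {s}) \<union> {\<sigma>1, \<sigma>2}" "u \<notin> T"
  have Th: "T - {\<sigma>1, \<sigma>2} \<subseteq> N - {s}"
    using T by blast
  consider "u \<in> {\<sigma>1, \<sigma>2}" | "u \<in> N - {s}" "u \<notin> {\<sigma>1, \<sigma>2}"
    using u(1) by blast
  then show "split_fun f s \<gamma> \<sigma>1 \<sigma>2 (S \<union> {u}) - split_fun f s \<gamma> \<sigma>1 \<sigma>2 S
             \<ge> split_fun f s \<gamma> \<sigma>1 \<sigma>2 (T \<union> {u}) - split_fun f s \<gamma> \<sigma>1 \<sigma>2 T"
  proof cases
    case 1
    with assms(3,5-7,10) ST Th u(2) show ?thesis
      by (intro split_fun_marginal_copy_antimono) auto
  next
    case 2
    with assms(3,5-7) ST Th u(2) show ?thesis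
      by (intro split_fun_marginal_other_antimono) auto
  qed
qed

end
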